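(* Let $(H,\alpha_H)$ be a Hom-bialgebra, let $m\in\mathbb Z$, and for Hom-Long dimodules $(U,\alpha_U),(V,\alpha_V)$ define $\xi_{U,V}:U\otimes V\to U\otimes V$, $u\otimes v\mapsto\alpha_U^{-1}(u)\cdot\alpha_H^m(v_{(1)})\otimes\alpha_V^{-1}(v_{(0)})$. Then for all Hom-Long dimodules $U,V,W$, $$(\xi_{U,V}\otimes\mathrm{id}_W)\circ a^{-1}_{U,V,W}\circ(\mathrm{id}_U\otimes\xi_{V,W})\circ a_{U,V,W}=a^{-1}_{U,V,W}\circ(\mathrm{id}_U\otimes\xi_{V,W})\circ a_{U,V,W}\circ(\xi_{U,V}\otimes\mathrm{id}_W)$$ as maps $(U\otimes V)\otimes W\to(U\otimes V)\otimes W$.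
   Context: $\Bbbk$ field of characteristic $0$; vector spaces finite-dimensional; structure maps $\alpha$ bijective; $i,j$ fixed integers; $a_{X,Y,Z}((x\otimes y)\otimes z)=\alpha_X^{i+1}(x)\otimes(y\otimes\alpha_Z^{-j-1}(z))$ is the associativity constraint of $\overline{\mathcal H}^{i,j}(Vec_\Bbbk)$ (objects $(X,\alpha_X)$, $\alpha_X$ a linear automorphism). Hom-bialgebra: Hom-algebra ($\alpha(a)(bc)=(ab)\alpha(c)$, $\alpha(1)=1$, $1a=a1=\alpha(a)$), Hom-coalgebra ($\varepsilon\alpha=\varepsilon$, $\alpha(c_1)\otimes\Delta(c_2)=\Delta(c_1)\otimes\alpha(c_2)$, $\varepsilon(c_1)c_2=c_1\varepsilon(c_2)=\alpha(c)$), $\Delta,\varepsilon$ unit-preserving Hom-algebra maps. A Hom-Long dimodule is $(U,\alpha_U)$, a right $H$-Hom-module ($(u\cdot a)\cdot\alpha_H(b)=\alpha_U(u)\cdot(ab)$, $u\cdot1_H=\alpha_U(u)$) and right $H$-Hom-comodule ($\rho(u)=u_{(0)}\otimes u_{(1)}$, $\alpha_U(u_{(0)})\otimes\Delta(u_{(1)})=\rho(u_{(0)})\otimes\alpha_H(u_{(1)})$, $\varepsilon(u_{(1)})u_{(0)}=\alpha_U(u)$), structure maps commuting with the $\alpha$'s, with $\rho(u\cdot h)=u_{(0)}\cdot\alpha_H(h)\otimes\alpha_H(u_{(1)})$. *)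

theory Defs
  imports Main "HOL-Library.Function_Algebras"
begin

text \<open>Finite-dimensional spaces over a field 'k are modelled concretely as
  coordinate spaces 'i \<Rightarrow> 'k with 'i a finite index type (every finite-dimensional
  space is of this form).  The tensor product of 'i \<Rightarrow> 'k and 'j \<Rightarrow> 'k is
  ('i \<times> 'j) \<Rightarrow> 'k.\<close>

definition sc :: "'k::field \<Rightarrow> ('i \<Rightarrow> 'k) \<Rightarrow> ('i \<Rightarrow> 'k)" where
  "sc c x = (\<lambda>i. c * x i)"

definition bvec :: "'i \<Rightarrow> ('i \<Rightarrow> 'k::field)" where
  "bvec i = (\<lambda>j. if j = i then 1 else 0)"

definition tensor :: "('i \<Rightarrow> 'k::field) \<Rightarrow> ('j \<Rightarrow> 'k) \<Rightarrow> ('i \<times> 'j \<Rightarrow> 'k)" where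
  "tensor x y = (\<lambda>(i, j). x i * y j)"

text \<open>Linear extension to U \<otimes> V of a bilinear map U \<times> V \<rightarrow> X
  (universal property of the tensor product).\<close>
definition tapp :: "(('i::finite \<Rightarrow> 'k::field) \<Rightarrow> ('j::finite \<Rightarrow> 'k) \<Rightarrow> ('x \<Rightarrow> 'k))
    \<Rightarrow> ('i \<times> 'j \<Rightarrow> 'k) \<Rightarrow> ('x \<Rightarrow> 'k)" where
  "tapp \<beta> t = (\<Sum>i\<in>UNIV. \<Sum>j\<in>UNIV. sc (t (i, j)) (\<beta> (bvec i) (bvec j)))"

definition tmap :: "(('i::finite \<Rightarrow> 'k::field) \<Rightarrow> ('i2 \<Rightarrow> 'k)) \<Rightarrow> (('j::finite \<Rightarrow> 'k) \<Rightarrow> ('j2 \<Rightarrow> 'k))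
    \<Rightarrow> ('i \<times> 'j \<Rightarrow> 'k) \<Rightarrow> ('i2 \<times> 'j2 \<Rightarrow> 'k)" where
  "tmap f g = tapp (\<lambda>x y. tensor (f x) (g y))"

definition assoc0 :: "(('a \<times> 'b) \<times> 'c \<Rightarrow> 'k) \<Rightarrow> ('a \<times> ('b \<times> 'c) \<Rightarrow> 'k)" where
  "assoc0 t = (\<lambda>(a, (b, c)). t ((a, b), c))"

definition lin :: "(('i \<Rightarrow> 'k::field) \<Rightarrow> ('j \<Rightarrow> 'k)) \<Rightarrow> bool" where
  "lin f \<longleftrightarrow> (\<forall>x y. f (x + y) = f x + f y) \<and> (\<forall>c x. f (sc c x) = sc c (f x))"

definition linf :: "(('i \<Rightarrow> 'k::field) \<Rightarrow> 'k) \<Rightarrow> bool" where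
  "linf f \<longleftrightarrow> (\<forall>x y. f (x + y) = f x + f y) \<and> (\<forall>c x. f (sc c x) = c * f x)"

definition bilin :: "(('i \<Rightarrow> 'k::field) \<Rightarrow> ('j \<Rightarrow> 'k) \<Rightarrow> ('l \<Rightarrow> 'k)) \<Rightarrow> bool" where
  "bilin b \<longleftrightarrow> (\<forall>x. lin (b x)) \<and> (\<forall>y. lin (\<lambda>x. b x y))"

definition zpow :: "('a \<Rightarrow> 'a) \<Rightarrow> int \<Rightarrow> ('a \<Rightarrow> 'a)" where
  "zpow f n = (if 0 \<le> n then f ^^ nat n else inv f ^^ nat (- n))"

definition hom_bialgebra ::
  "(('h::finite \<Rightarrow> 'k::field) \<Rightarrow> ('h \<Rightarrow> 'k) \<Rightarrow> ('h \<Rightarrow> 'k)) \<Rightarrow> ('h \<Rightarrow> 'k)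
   \<Rightarrow> (('h \<Rightarrow> 'k) \<Rightarrow> ('h \<times> 'h \<Rightarrow> 'k)) \<Rightarrow> (('h \<Rightarrow> 'k) \<Rightarrow> 'k) \<Rightarrow> (('h \<Rightarrow> 'k) \<Rightarrow> ('h \<Rightarrow> 'k)) \<Rightarrow> bool"
where
  "hom_bialgebra mult one Delta eps \<alpha> \<longleftrightarrow>
     lin \<alpha> \<and> bij \<alpha> \<and>
     \<comment> \<open>Hom-algebra\<close>
     bilin mult \<and>
     (\<forall>a b. \<alpha> (mult a b) = mult (\<alpha> a) (\<alpha> b)) \<and> \<alpha> one = one \<and>
     (\<forall>a b c. mult (\<alpha> a) (mult b c) = mult (mult a b) (\<alpha> c)) \<and>
     (\<forall>a. mult one a = \<alpha> a \<and> mult a one = \<alpha> a) \<and>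
     \<comment> \<open>Hom-coalgebra\<close>
     lin Delta \<and> linf eps \<and>
     (\<forall>c. Delta (\<alpha> c) = tmap \<alpha> \<alpha> (Delta c)) \<and>
     (\<forall>c. eps (\<alpha> c) = eps c) \<and>
     (\<forall>c. tmap \<alpha> Delta (Delta c) = assoc0 (tmap Delta \<alpha> (Delta c))) \<and>
     (\<forall>c. tapp (\<lambda>x y. sc (eps x) y) (Delta c) = \<alpha> c) \<and>
     (\<forall>c. tapp (\<lambda>x y. sc (eps y) x) (Delta c) = \<alpha> c) \<and>
     \<comment> \<open>Delta and eps are unit-preserving Hom-algebra maps\<close>
     (\<forall>a b. Delta (mult a b) =
        tapp (\<lambda>x y. tapp (\<lambda>x' y'. tensor (mult x x') (mult y y')) (Delta b)) (Delta a)) \<and>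
     Delta one = tensor one one \<and>
     (\<forall>a b. eps (mult a b) = eps a * eps b) \<and> eps one = 1"

definition hom_long_dimodule ::
  "(('h::finite \<Rightarrow> 'k::field) \<Rightarrow> ('h \<Rightarrow> 'k) \<Rightarrow> ('h \<Rightarrow> 'k)) \<Rightarrow> ('h \<Rightarrow> 'k)
   \<Rightarrow> (('h \<Rightarrow> 'k) \<Rightarrow> ('h \<times> 'h \<Rightarrow> 'k)) \<Rightarrow> (('h \<Rightarrow> 'k) \<Rightarrow> 'k) \<Rightarrow> (('h \<Rightarrow> 'k) \<Rightarrow> ('h \<Rightarrow> 'k))
   \<Rightarrow> (('u::finite \<Rightarrow> 'k) \<Rightarrow> ('u \<Rightarrow> 'k))
   \<Rightarrow> (('u \<Rightarrow> 'k) \<Rightarrow> ('h \<Rightarrow> 'k) \<Rightarrow> ('u \<Rightarrow> 'k))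
   \<Rightarrow> (('u \<Rightarrow> 'k) \<Rightarrow> ('u \<times> 'h \<Rightarrow> 'k)) \<Rightarrow> bool"
where
  "hom_long_dimodule mult one Delta eps \<alpha>H \<alpha>U act rho \<longleftrightarrow>
     lin \<alpha>U \<and> bij \<alpha>U \<and>
     \<comment> \<open>right Hom-module\<close>
     bilin act \<and>
     (\<forall>u a b. act (act u a) (\<alpha>H b) = act (\<alpha>U u) (mult a b)) \<and>
     (\<forall>u. act u one = \<alpha>U u) \<and>
     (\<forall>u a. \<alpha>U (act u a) = act (\<alpha>U u) (\<alpha>H a)) \<and>
     \<comment> \<open>right Hom-comodule\<close>
     lin rho \<and>
     (\<forall>u. rho (\<alpha>U u) = tmap \<alpha>U \<alpha>H (rho u)) \<and>
     (\<forall>u. tmap \<alpha>U Delta (rho u) = assoc0 (tmap rho \<alpha>H (rho u))) \<and>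
     (\<forall>u. tapp (\<lambda>x h. sc (eps h) x) (rho u) = \<alpha>U u) \<and>
     \<comment> \<open>Long compatibility\<close>
     (\<forall>u h. rho (act u h) = tmap (\<lambda>x. act x (\<alpha>H h)) \<alpha>H (rho u))"

definition xi ::
  "(('h::finite \<Rightarrow> 'k::field) \<Rightarrow> ('h \<Rightarrow> 'k)) \<Rightarrow> int
   \<Rightarrow> (('u::finite \<Rightarrow> 'k) \<Rightarrow> ('u \<Rightarrow> 'k)) \<Rightarrow> (('u \<Rightarrow> 'k) \<Rightarrow> ('h \<Rightarrow> 'k) \<Rightarrow> ('u \<Rightarrow> 'k))
   \<Rightarrow> (('v::finite \<Rightarrow> 'k) \<Rightarrow> ('v \<Rightarrow> 'k)) \<Rightarrow> (('v \<Rightarrow> 'k) \<Rightarrow> ('v \<times> 'h \<Rightarrow> 'k))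
   \<Rightarrow> ('u \<times> 'v \<Rightarrow> 'k) \<Rightarrow> ('u \<times> 'v \<Rightarrow> 'k)"
where
  "xi \<alpha>H m \<alpha>U actU \<alpha>V rhoV =
     tapp (\<lambda>u v. tapp (\<lambda>v0 v1. tensor (actU (inv \<alpha>U u) (zpow \<alpha>H m v1)) (inv \<alpha>V v0)) (rhoV v))"

text \<open>Associativity constraint of H-bar^{i,j}(Vec_k):
  a((x \<otimes> y) \<otimes> z) = \<alpha>X^{i+1}(x) \<otimes> (y \<otimes> \<alpha>Z^{-j-1}(z)), and its inverse.\<close>
definition assocH ::
  "int \<Rightarrow> int \<Rightarrow> (('a::finite \<Rightarrow> 'k::field) \<Rightarrow> ('a \<Rightarrow> 'k)) \<Rightarrow> (('c::finite \<Rightarrow> 'k) \<Rightarrow> ('c \<Rightarrow> 'k))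
   \<Rightarrow> (('a \<times> 'b::finite) \<times> 'c \<Rightarrow> 'k) \<Rightarrow> ('a \<times> ('b \<times> 'c) \<Rightarrow> 'k)"
where
  "assocH i j \<alpha>X \<alpha>Z =
     tapp (\<lambda>xy z. tapp (\<lambda>x y. tensor (zpow \<alpha>X (i + 1) x) (tensor y (zpow \<alpha>Z (- j - 1) z))) xy)"

definition assocH_inv ::
  "int \<Rightarrow> int \<Rightarrow> (('a::finite \<Rightarrow> 'k::field) \<Rightarrow> ('a \<Rightarrow> 'k)) \<Rightarrow> (('c::finite \<Rightarrow> 'k) \<Rightarrow> ('c \<Rightarrow> 'k))
   \<Rightarrow> ('a \<times> ('b::finite \<times> 'c) \<Rightarrow> 'k) \<Rightarrow> (('a \<times> 'b) \<times> 'c \<Rightarrow> 'k)"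
where
  "assocH_inv i j \<alpha>X \<alpha>Z =
     tapp (\<lambda>x yz. tapp (\<lambda>y z. tensor (tensor (zpow \<alpha>X (- i - 1) x) y) (zpow \<alpha>Z (j + 1) z)) yz)"

end

theory Submission
  imports Defs
begin

text \<open>Evaluate both sides on a pure tensor \<open>(u \<otimes> v) \<otimes> w\<close>.  Transported along the
  associator, \<open>id \<otimes> \<xi>\<^sub>V\<^sub>,\<^sub>W\<close> replaces \<open>v\<close> by \<open>\<alpha>\<^sub>V\<^sup>-\<^sup>1(v) \<cdot> \<alpha>\<^sub>H\<^sup>m(w\<^sub>(\<^sub>1\<^sub>))\<close>, the powers of
  \<open>\<alpha>\<^sub>U\<close> contributed by \<open>a\<close> and \<open>a\<^sup>-\<^sup>1\<close> cancelling.  Applying \<open>\<xi>\<^sub>U\<^sub>,\<^sub>V\<close> afterwards needs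
  the coaction of \<open>V\<close> on this product, and the Long condition
  \<open>\<rho>(x \<cdot> h) = x\<^sub>(\<^sub>0\<^sub>) \<cdot> \<alpha>\<^sub>H(h) \<otimes> \<alpha>\<^sub>H(x\<^sub>(\<^sub>1\<^sub>))\<close> pushes the action through it.  Both
  sides then become the same double sum over the coactions of \<open>V\<close> and \<open>W\<close>, taken in
  opposite orders.\<close>

lemma sum_fun_apply: "finite A \<Longrightarrow> (sum g A) x = (\<Sum>a\<in>A. g a x)"
  by (induction A rule: finite_induct) auto

lemma lin_add: "lin f \<Longrightarrow> f (x + y) = f x + f y"
  by (simp add: lin_def)

lemma lin_sc: "lin f \<Longrightarrow> f (sc c x) = sc c (f x)"
  by (simp add: lin_def)

lemma sc_zero_left: "sc 0 x = 0"
  by (simp add: sc_def fun_eq_iff)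

lemma lin_zero: "lin f \<Longrightarrow> f 0 = 0"
  using lin_sc[of f 0 0] by (simp add: sc_zero_left)

lemma lin_sum:
  assumes "lin f" "finite A"
  shows "f (sum g A) = (\<Sum>a\<in>A. f (g a))"
  using assms(2)
proof (induction A rule: finite_induct)
  case empty
  show ?case by (simp only: sum.empty lin_zero[OF assms(1)])
next
  case (insert a A)
  then show ?case by (simp only: sum.insert[OF insert(1,2)] lin_add[OF assms(1)])
qed

lemma lin_id: "lin (\<lambda>x. x)" "lin id"
  by (auto simp: lin_def)

lemma lin_comp: "lin f \<Longrightarrow> lin g \<Longrightarrow> lin (\<lambda>x. f (g x))"
  by (simp add: lin_def)

lemma lin_funpow: "lin (f :: ('i \<Rightarrow> 'k::field) \<Rightarrow> ('i \<Rightarrow> 'k)) \<Longrightarrow> lin (f ^^ n)"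
  by (induction n) (simp_all add: lin_id lin_comp comp_def)

lemma lin_inv:
  assumes "lin f" "bij f"
  shows "lin (inv f)"
  unfolding lin_def
proof (intro conjI allI)
  have f_inv: "f (inv f z) = z" for z
    using assms(2) by (simp add: bij_is_surj surj_f_inv_f)
  have inj: "inj f"
    using assms(2) by (rule bij_is_inj)
  show "inv f (x + y) = inv f x + inv f y" for x y
    using inj by (rule injD) (simp add: f_inv lin_add[OF assms(1)])
  show "inv f (sc c x) = sc c (inv f x)" for c x
    using inj by (rule injD) (simp add: f_inv lin_sc[OF assms(1)])
qed

lemma lin_zpow: "lin f \<Longrightarrow> bij f \<Longrightarrow> lin (zpow f n)"
  by (simp add: zpow_def lin_funpow lin_inv)

lemma zpow_neg_cancel:
  assumes "bij f"
  shows "zpow f (- n) (zpow f n x) = x"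
proof (cases n "0::int" rule: linorder_cases)
  case less
  then show ?thesis
    using fn_o_inv_fn_is_id[OF assms, of "nat (- n)"] by (simp add: zpow_def fun_eq_iff)
next
  case greater
  then show ?thesis
    using inv_fn_o_fn_is_id[OF assms, of "nat n"] by (simp add: zpow_def fun_eq_iff)
qed (simp add: zpow_def)

lemma lin_tensor_left: "lin (\<lambda>x. tensor x y)"
  by (auto simp: lin_def tensor_def sc_def fun_eq_iff distrib_right mult.assoc)

lemma lin_tensor_right: "lin (tensor x)"
  by (auto simp: lin_def tensor_def sc_def fun_eq_iff distrib_left mult.left_commute)

lemma bilinI: "(\<And>x. lin (\<beta> x)) \<Longrightarrow> (\<And>y. lin (\<lambda>x. \<beta> x y)) \<Longrightarrow> bilin \<beta>"
  by (simp add: bilin_def)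

lemma tapp_apply: "tapp \<beta> t x = (\<Sum>i\<in>UNIV. \<Sum>j\<in>UNIV. t (i, j) * \<beta> (bvec i) (bvec j) x)"
  by (simp add: tapp_def sum_fun_apply sc_def)

lemma lin_tapp: "lin (tapp \<beta>)"
  unfolding lin_def
  by (auto simp: fun_eq_iff tapp_apply sc_def distrib_right sum.distrib sum_distrib_left mult.assoc)

lemma lin_tapp_kernel: "(\<And>x y. lin (\<lambda>u. \<gamma> u x y)) \<Longrightarrow> lin (\<lambda>u. tapp (\<gamma> u) t)"
  unfolding lin_def
  by (auto simp: fun_eq_iff tapp_apply sc_def distrib_left sum.distrib sum_distrib_left
      mult.left_commute)

lemma lin_tmap: "lin (tmap f g)"
  by (simp add: tmap_def lin_tapp)

lemma tapp_linear: "lin L \<Longrightarrow> L (tapp \<beta> t) = tapp (\<lambda>x y. L (\<beta> x y)) t"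
  unfolding tapp_def by (simp add: lin_sum lin_sc)

lemma basis_expansion: "(x :: 'i::finite \<Rightarrow> 'k::field) = (\<Sum>i\<in>UNIV. sc (x i) (bvec i))"
proof -
  have "(\<Sum>i\<in>UNIV. x i * (if k = i then 1 else 0)) = x k" for k
    by (simp add: if_distrib[of "(*) _"] cong: if_cong)
  then show ?thesis
    by (simp add: fun_eq_iff sum_fun_apply sc_def bvec_def)
qed

lemma tapp_tensor:
  assumes "bilin \<beta>"
  shows "tapp \<beta> (tensor x y) = \<beta> x y"
proof -
  have lin1: "lin (\<lambda>x. \<beta> x y)" for y
    using assms by (simp add: bilin_def)
  have lin2: "lin (\<beta> x)" for x
    using assms by (simp add: bilin_def)
  have "\<beta> x y = \<beta> (\<Sum>i\<in>UNIV. sc (x i) (bvec i)) (\<Sum>j\<in>UNIV. sc (y j) (bvec j))"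
    using basis_expansion[of x] basis_expansion[of y] by simp
  also have "\<dots> = (\<Sum>j\<in>UNIV. sc (y j) (\<Sum>i\<in>UNIV. sc (x i) (\<beta> (bvec i) (bvec j))))"
    by (simp only: lin_sum[OF lin1] lin_sum[OF lin2] lin_sc[OF lin1] lin_sc[OF lin2] finite)
  also have "\<dots> = tapp \<beta> (tensor x y)"
    by (simp add: fun_eq_iff tapp_apply sum_fun_apply sc_def tensor_def sum_distrib_left mult_ac;
        intro allI sum.swap)
  finally show ?thesis ..
qed

lemma tapp_tensor_eq_id: "tapp tensor t = t"
proof -
  have "(\<Sum>i\<in>UNIV. \<Sum>j\<in>UNIV. t (i, j) * tensor (bvec i) (bvec j) (a, b)) = t (a, b)" for a b
    by (simp add: tensor_def bvec_def if_distrib[of "(*) _"] cong: if_cong)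
  then show ?thesis
    by (auto simp: fun_eq_iff tapp_apply)
qed

lemma tensor_ext:
  fixes F :: "('i::finite \<times> 'j::finite \<Rightarrow> 'k::field) \<Rightarrow> ('l \<Rightarrow> 'k)"
  assumes "lin F" "lin G" "\<And>x y. F (tensor x y) = G (tensor x y)"
  shows "F = G"
proof
  fix t
  have "F t = tapp (\<lambda>x y. F (tensor x y)) t"
    using tapp_linear[OF assms(1), of tensor t] by (simp add: tapp_tensor_eq_id)
  also have "\<dots> = G t"
    using tapp_linear[OF assms(2), of tensor t] by (simp add: tapp_tensor_eq_id assms(3))
  finally show "F t = G t" .
qed

lemma tensor3_ext:
  fixes F :: "(('i::finite \<times> 'j::finite) \<times> 'l::finite \<Rightarrow> 'k::field) \<Rightarrow> ('m \<Rightarrow> 'k)"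
  assumes "lin F" "lin G" "\<And>x y z. F (tensor (tensor x y) z) = G (tensor (tensor x y) z)"
  shows "F = G"
proof (rule tensor_ext[OF assms(1,2)])
  fix xy z
  have "(\<lambda>xy. F (tensor xy z)) = (\<lambda>xy. G (tensor xy z))"
    by (intro tensor_ext lin_comp[OF assms(1) lin_tensor_left] lin_comp[OF assms(2) lin_tensor_left])
      (rule assms(3))
  then show "F (tensor xy z) = G (tensor xy z)"
    by (rule fun_cong)
qed

lemma sum_swap_nested:
  "(\<Sum>i\<in>A. \<Sum>j\<in>B. \<Sum>k\<in>C. \<Sum>l\<in>D. f i j k l) = (\<Sum>k\<in>C. \<Sum>l\<in>D. \<Sum>i\<in>A. \<Sum>j\<in>B. f i j k l)"
proof -
  have "(\<Sum>i\<in>A. \<Sum>j\<in>B. \<Sum>k\<in>C. \<Sum>l\<in>D. f i j k l) = (\<Sum>i\<in>A. \<Sum>k\<in>C. \<Sum>l\<in>D. \<Sum>j\<in>B. f i j k l)"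
    by (rule sum.cong[OF refl], subst sum.swap, rule sum.cong[OF refl], rule sum.swap)
  also have "\<dots> = (\<Sum>k\<in>C. \<Sum>l\<in>D. \<Sum>i\<in>A. \<Sum>j\<in>B. f i j k l)"
    by (subst sum.swap, rule sum.cong[OF refl], rule sum.swap)
  finally show ?thesis .
qed

lemma tapp_swap:
  "tapp (\<lambda>a b. tapp (G a b) s) t = tapp (\<lambda>c d. tapp (\<lambda>a b. G a b c d) t) s"
proof -
  have "(\<Sum>i\<in>UNIV. \<Sum>j\<in>UNIV. t (i, j) * (\<Sum>k\<in>UNIV. \<Sum>l\<in>UNIV. s (k, l) * G (bvec i) (bvec j) (bvec k) (bvec l) x))
      = (\<Sum>k\<in>UNIV. \<Sum>l\<in>UNIV. s (k, l) * (\<Sum>i\<in>UNIV. \<Sum>j\<in>UNIV. t (i, j) * G (bvec i) (bvec j) (bvec k) (bvec l) x))"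
    for x
    by (simp only: sum_distrib_left mult.left_commute, rule sum_swap_nested)
  then show ?thesis
    by (simp add: fun_eq_iff tapp_apply)
qed

lemma tmap_tensor: "lin f \<Longrightarrow> lin g \<Longrightarrow> tmap f g (tensor x y) = tensor (f x) (g y)"
  unfolding tmap_def
  by (intro tapp_tensor bilinI lin_comp[OF lin_tensor_right] lin_comp[OF lin_tensor_left])

lemma tapp_tmap:
  assumes "bilin \<beta>" "lin f" "lin g"
  shows "tapp \<beta> (tmap f g t) = tapp (\<lambda>x y. \<beta> (f x) (g y)) t"
  unfolding tmap_def by (simp add: tapp_linear[OF lin_tapp] tapp_tensor[OF assms(1)])

lemma tmap_tmap:
  assumes "lin f" "lin g"
  shows "tmap f g (tmap f' g' t) = tmap (\<lambda>x. f (f' x)) (\<lambda>y. g (g' y)) t"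
  unfolding tmap_def[of f' g']
  by (simp only: tapp_linear[OF lin_tmap] tmap_tensor[OF assms]) (simp only: tmap_def)

lemma tmap_id_id: "tmap (\<lambda>x. x) (\<lambda>y. y) t = t"
  by (simp add: tmap_def tapp_tensor_eq_id)

lemma lin_assocH: "lin (assocH i j \<alpha>X \<alpha>Z)"
  by (simp add: assocH_def lin_tapp)

lemma lin_assocH_inv: "lin (assocH_inv i j \<alpha>X \<alpha>Z)"
  by (simp add: assocH_inv_def lin_tapp)

lemma lin_xi: "lin (xi \<alpha>H m \<alpha>U act \<alpha>V rho)"
  by (simp add: xi_def lin_tapp)

lemma assocH_tensor:
  assumes "lin \<alpha>X" "bij \<alpha>X" "lin \<alpha>Z" "bij \<alpha>Z"
  shows "assocH i j \<alpha>X \<alpha>Z (tensor (tensor x y) z)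
       = tensor (zpow \<alpha>X (i + 1) x) (tensor y (zpow \<alpha>Z (- j - 1) z))"
proof -
  have inner: "bilin (\<lambda>x y. tensor (zpow \<alpha>X (i + 1) x) (tensor y (zpow \<alpha>Z (- j - 1) z)))" for z
    by (intro bilinI lin_comp[OF lin_tensor_right lin_tensor_left]
        lin_comp[OF lin_tensor_left lin_zpow] assms)
  have outer: "bilin (\<lambda>xy z. tapp (\<lambda>x y. tensor (zpow \<alpha>X (i + 1) x) (tensor y (zpow \<alpha>Z (- j - 1) z))) xy)"
    by (intro bilinI lin_tapp_kernel lin_tapp
        lin_comp[OF lin_tensor_right lin_comp[OF lin_tensor_right lin_zpow]] assms)
  show ?thesis
    unfolding assocH_def by (simp only: tapp_tensor[OF outer] tapp_tensor[OF inner])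
qed

lemma assocH_inv_tensor:
  assumes "lin \<alpha>X" "bij \<alpha>X" "lin \<alpha>Z" "bij \<alpha>Z"
  shows "assocH_inv i j \<alpha>X \<alpha>Z (tensor x (tensor y z))
       = tensor (tensor (zpow \<alpha>X (- i - 1) x) y) (zpow \<alpha>Z (j + 1) z)"
proof -
  have inner: "bilin (\<lambda>y z. tensor (tensor (zpow \<alpha>X (- i - 1) x) y) (zpow \<alpha>Z (j + 1) z))" for x
    by (intro bilinI lin_comp[OF lin_tensor_right lin_zpow]
        lin_comp[OF lin_tensor_left lin_tensor_right] assms)
  have outer: "bilin (\<lambda>x yz. tapp (\<lambda>y z. tensor (tensor (zpow \<alpha>X (- i - 1) x) y) (zpow \<alpha>Z (j + 1) z)) yz)"
    by (intro bilinI lin_tapp lin_tapp_kernel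
        lin_comp[OF lin_tensor_left lin_comp[OF lin_tensor_left lin_zpow]] assms)
  show ?thesis
    unfolding assocH_inv_def by (simp only: tapp_tensor[OF outer] tapp_tensor[OF inner])
qed

lemma xi_tensor:
  assumes "bilin act" "lin (inv \<alpha>U)" "lin rho"
  shows "xi \<alpha>H m \<alpha>U act \<alpha>V rho (tensor u v)
       = tapp (\<lambda>v0 v1. tensor (act (inv \<alpha>U u) (zpow \<alpha>H m v1)) (inv \<alpha>V v0)) (rho v)"
proof -
  have "lin (\<lambda>x. act x h)" for h
    using assms(1) by (simp add: bilin_def)
  then have "bilin (\<lambda>u v. tapp (\<lambda>v0 v1. tensor (act (inv \<alpha>U u) (zpow \<alpha>H m v1)) (inv \<alpha>V v0)) (rho v))"
    by (intro bilinI lin_comp[OF lin_tapp assms(3)] lin_tapp_kernel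
        lin_comp[OF lin_tensor_left lin_comp[where g = "inv \<alpha>U"]] assms(2))
  then show ?thesis
    unfolding xi_def by (rule tapp_tensor)
qed

lemma dimodule_inv_act:
  assumes "hom_long_dimodule mult one Delta eps \<alpha>H \<alpha>X act rho"
  shows "inv \<alpha>X (act x (\<alpha>H h)) = act (inv \<alpha>X x) h"
proof -
  from assms have bij: "bij \<alpha>X" and act_comm: "\<And>u a. \<alpha>X (act u a) = act (\<alpha>X u) (\<alpha>H a)"
    unfolding hom_long_dimodule_def by blast+
  have "\<alpha>X (act (inv \<alpha>X x) h) = act x (\<alpha>H h)"
    using act_comm bij by (simp add: bij_is_surj surj_f_inv_f)
  then show ?thesis
    using bij by (metis bij_inv_eq_iff)
qed

lemma dimodule_coaction_inv:
  assumes "hom_long_dimodule mult one Delta eps \<alpha>H \<alpha>X act rho" "lin \<alpha>H" "bij \<alpha>H"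
  shows "rho (inv \<alpha>X x) = tmap (inv \<alpha>X) (inv \<alpha>H) (rho x)"
proof -
  from assms(1) have bij: "bij \<alpha>X" and lin: "lin \<alpha>X"
    and coact_comm: "\<And>u. rho (\<alpha>X u) = tmap \<alpha>X \<alpha>H (rho u)"
    unfolding hom_long_dimodule_def by blast+
  have "tmap (inv \<alpha>X) (inv \<alpha>H) (rho x) = tmap (inv \<alpha>X) (inv \<alpha>H) (tmap \<alpha>X \<alpha>H (rho (inv \<alpha>X x)))"
    using coact_comm[of "inv \<alpha>X x"] bij by (simp add: bij_is_surj surj_f_inv_f)
  also have "\<dots> = tmap (\<lambda>x. inv \<alpha>X (\<alpha>X x)) (\<lambda>y. inv \<alpha>H (\<alpha>H y)) (rho (inv \<alpha>X x))"
    by (simp add: tmap_tmap lin_inv lin bij assms(2,3))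
  also have "\<dots> = rho (inv \<alpha>X x)"
    using bij assms(3) by (simp add: bij_is_inj tmap_id_id)
  finally show ?thesis ..
qed

lemma xi_tensor_act:
  assumes V: "hom_long_dimodule mult one Delta eps \<alpha>H \<alpha>V actV rhoV"
    and "lin \<alpha>H" "bij \<alpha>H" "bilin actU" "lin (inv \<alpha>U)"
  shows "xi \<alpha>H m \<alpha>U actU \<alpha>V rhoV (tensor u (actV (inv \<alpha>V v) h))
       = tapp (\<lambda>v0 v1. tensor (actU (inv \<alpha>U u) (zpow \<alpha>H m v1)) (actV (inv \<alpha>V (inv \<alpha>V v0)) h))
           (rhoV v)"
proof -
  from V have "lin \<alpha>V" "bij \<alpha>V" "bilin actV" "lin rhoV"
    and long: "\<And>x h. rhoV (actV x h) = tmap (\<lambda>y. actV y (\<alpha>H h)) \<alpha>H (rhoV x)"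
    unfolding hom_long_dimodule_def by blast+
  have lin_act: "lin (\<lambda>x. actV x h)" for h
    using \<open>bilin actV\<close> by (simp add: bilin_def)
  have lin_inv_V: "lin (inv \<alpha>V)"
    using \<open>lin \<alpha>V\<close> \<open>bij \<alpha>V\<close> by (rule lin_inv)
  have lin_inv_H: "lin (inv \<alpha>H)"
    using assms(2,3) by (rule lin_inv)
  have lin_actU: "lin (actU x)" for x
    using assms(4) by (simp add: bilin_def)
  let ?g = "\<lambda>v0 v1. tensor (actU (inv \<alpha>U u) (zpow \<alpha>H m v1)) (inv \<alpha>V v0)"
  have "bilin ?g"
    by (intro bilinI lin_comp[OF lin_tensor_left lin_comp[OF lin_actU lin_zpow]]
        lin_comp[OF lin_tensor_right lin_inv_V] assms(2,3))
  have "xi \<alpha>H m \<alpha>U actU \<alpha>V rhoV (tensor u (actV (inv \<alpha>V v) h)) = tapp ?g (rhoV (actV (inv \<alpha>V v) h))"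
    by (simp add: xi_tensor assms(4,5) \<open>lin rhoV\<close>)
  also have "rhoV (actV (inv \<alpha>V v) h) = tmap (\<lambda>x. actV (inv \<alpha>V x) (\<alpha>H h)) (\<lambda>y. \<alpha>H (inv \<alpha>H y)) (rhoV v)"
    by (simp add: long dimodule_coaction_inv[OF V assms(2,3)] tmap_tmap lin_act assms(2))
  also have "tapp ?g \<dots> = tapp (\<lambda>v0 v1. ?g (actV (inv \<alpha>V v0) (\<alpha>H h)) (\<alpha>H (inv \<alpha>H v1))) (rhoV v)"
    by (rule tapp_tmap[OF \<open>bilin ?g\<close> lin_comp[OF lin_act lin_inv_V] lin_comp[OF assms(2) lin_inv_H]])
  also have "\<dots> = tapp (\<lambda>v0 v1. tensor (actU (inv \<alpha>U u) (zpow \<alpha>H m v1)) (actV (inv \<alpha>V (inv \<alpha>V v0)) h))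
           (rhoV v)"
    using assms(3) by (simp add: bij_is_surj surj_f_inv_f dimodule_inv_act[OF V])
  finally show ?thesis .
qed

definition assocH_conj ::
  "int \<Rightarrow> int \<Rightarrow> (('a::finite \<Rightarrow> 'k::field) \<Rightarrow> ('a \<Rightarrow> 'k)) \<Rightarrow> (('c::finite \<Rightarrow> 'k) \<Rightarrow> ('c \<Rightarrow> 'k))
   \<Rightarrow> (('b::finite \<times> 'c \<Rightarrow> 'k) \<Rightarrow> ('b \<times> 'c \<Rightarrow> 'k))
   \<Rightarrow> (('a \<times> 'b) \<times> 'c \<Rightarrow> 'k) \<Rightarrow> (('a \<times> 'b) \<times> 'c \<Rightarrow> 'k)"
where
  "assocH_conj i j \<alpha>X \<alpha>Z f = assocH_inv i j \<alpha>X \<alpha>Z \<circ> tmap id f \<circ> assocH i j \<alpha>X \<alpha>Z"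

lemma lin_assocH_conj: "lin (assocH_conj i j \<alpha>X \<alpha>Z f)"
  unfolding assocH_conj_def comp_def
  by (rule lin_comp[OF lin_assocH_inv lin_comp[OF lin_tmap lin_assocH]])

lemma assocH_conj_xi_tensor:
  assumes "lin \<alpha>U" "bij \<alpha>U" "lin \<alpha>W" "bij \<alpha>W" "bilin actV" "lin (inv \<alpha>V)" "lin rhoW"
  shows "assocH_conj i j \<alpha>U \<alpha>W (xi \<alpha>H m \<alpha>V actV \<alpha>W rhoW) (tensor (tensor u v) w)
       = tapp (\<lambda>w0 w1. tensor (tensor u (actV (inv \<alpha>V v) (zpow \<alpha>H m w1))) (zpow \<alpha>W (j + 1) (inv \<alpha>W w0)))
           (rhoW (zpow \<alpha>W (- j - 1) w))"
proof -
  let ?s = "rhoW (zpow \<alpha>W (- j - 1) w)"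
  let ?u = "zpow \<alpha>U (i + 1) u"
  have "assocH_conj i j \<alpha>U \<alpha>W (xi \<alpha>H m \<alpha>V actV \<alpha>W rhoW) (tensor (tensor u v) w)
      = assocH_inv i j \<alpha>U \<alpha>W (tensor ?u (tapp (\<lambda>w0 w1. tensor (actV (inv \<alpha>V v) (zpow \<alpha>H m w1)) (inv \<alpha>W w0)) ?s))"
    by (simp add: assocH_conj_def assocH_tensor tmap_tensor xi_tensor lin_id lin_xi assms)
  also have "\<dots> = tapp (\<lambda>w0 w1. assocH_inv i j \<alpha>U \<alpha>W (tensor ?u (tensor (actV (inv \<alpha>V v) (zpow \<alpha>H m w1)) (inv \<alpha>W w0)))) ?s"
    by (rule tapp_linear[OF lin_comp[OF lin_assocH_inv lin_tensor_right]])
  also have "\<dots> = tapp (\<lambda>w0 w1. tensor (tensor u (actV (inv \<alpha>V v) (zpow \<alpha>H m w1))) (zpow \<alpha>W (j + 1) (inv \<alpha>W w0))) ?s"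
    using zpow_neg_cancel[OF assms(2), of "i + 1"] by (simp add: assocH_inv_tensor assms)
  finally show ?thesis .
qed

lemma xi_id_commutes_assocH_conj_tensor:
  assumes V: "hom_long_dimodule mult one Delta eps \<alpha>H \<alpha>V actV rhoV"
    and "lin \<alpha>H" "bij \<alpha>H" "lin \<alpha>U" "bij \<alpha>U" "bilin actU" "lin \<alpha>W" "bij \<alpha>W" "lin rhoW"
  shows "tmap (xi \<alpha>H m \<alpha>U actU \<alpha>V rhoV) id
           (assocH_conj i j \<alpha>U \<alpha>W (xi \<alpha>H m \<alpha>V actV \<alpha>W rhoW) (tensor (tensor u v) w))
       = assocH_conj i j \<alpha>U \<alpha>W (xi \<alpha>H m \<alpha>V actV \<alpha>W rhoW)
           (tmap (xi \<alpha>H m \<alpha>U actU \<alpha>V rhoV) id (tensor (tensor u v) w))"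
proof -
  let ?K = "assocH_conj i j \<alpha>U \<alpha>W (xi \<alpha>H m \<alpha>V actV \<alpha>W rhoW)"
  let ?\<xi> = "xi \<alpha>H m \<alpha>U actU \<alpha>V rhoV"
  from V have "lin \<alpha>V" "bij \<alpha>V" "bilin actV" "lin rhoV"
    unfolding hom_long_dimodule_def by blast+
  have lin_inv_V: "lin (inv \<alpha>V)"
    using \<open>lin \<alpha>V\<close> \<open>bij \<alpha>V\<close> by (rule lin_inv)
  have lin_inv_U: "lin (inv \<alpha>U)"
    using assms(4,5) by (rule lin_inv)
  note K_tensor = assocH_conj_xi_tensor[OF assms(4,5,7,8) \<open>bilin actV\<close> lin_inv_V assms(9)]
  let ?s = "rhoW (zpow \<alpha>W (- j - 1) w)"
  let ?G = "\<lambda>v0 v1 w0 w1. tensor (tensor (actU (inv \<alpha>U u) (zpow \<alpha>H m v1))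
      (actV (inv \<alpha>V (inv \<alpha>V v0)) (zpow \<alpha>H m w1))) (zpow \<alpha>W (j + 1) (inv \<alpha>W w0))"
  have "tmap ?\<xi> id (?K (tensor (tensor u v) w)) = tapp (\<lambda>w0 w1. tapp (\<lambda>v0 v1. ?G v0 v1 w0 w1) (rhoV v)) ?s"
    by (simp only: K_tensor tapp_linear[OF lin_tmap] tmap_tensor[OF lin_xi lin_id(2)] id_apply
        xi_tensor_act[OF V assms(2,3,6) lin_inv_U] tapp_linear[OF lin_tensor_left])
  also have "\<dots> = tapp (\<lambda>v0 v1. tapp (\<lambda>w0 w1. ?G v0 v1 w0 w1) ?s) (rhoV v)"
    by (rule tapp_swap)
  also have "\<dots> = tapp (\<lambda>v0 v1. ?K (tensor (tensor (actU (inv \<alpha>U u) (zpow \<alpha>H m v1)) (inv \<alpha>V v0)) w)) (rhoV v)"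
    by (simp only: K_tensor)
  also have "\<dots> = ?K (tapp (\<lambda>v0 v1. tensor (tensor (actU (inv \<alpha>U u) (zpow \<alpha>H m v1)) (inv \<alpha>V v0)) w) (rhoV v))"
    by (rule tapp_linear[OF lin_assocH_conj, symmetric])
  also have "\<dots> = ?K (tmap ?\<xi> id (tensor (tensor u v) w))"
    by (simp only: tmap_tensor[OF lin_xi lin_id(2)] id_apply xi_tensor[OF assms(6) lin_inv_U \<open>lin rhoV\<close>]
        tapp_linear[OF lin_tensor_left])
  finally show ?thesis .
qed

theorem theorem6p4:
  fixes mult :: "('h::finite \<Rightarrow> 'k::field_char_0) \<Rightarrow> ('h \<Rightarrow> 'k) \<Rightarrow> ('h \<Rightarrow> 'k)"
    and one :: "'h \<Rightarrow> 'k"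
    and Delta :: "('h \<Rightarrow> 'k) \<Rightarrow> ('h \<times> 'h \<Rightarrow> 'k)"
    and eps :: "('h \<Rightarrow> 'k) \<Rightarrow> 'k"
    and \<alpha>H :: "('h \<Rightarrow> 'k) \<Rightarrow> ('h \<Rightarrow> 'k)"
    and i j m :: int
    and \<alpha>U :: "('u::finite \<Rightarrow> 'k) \<Rightarrow> ('u \<Rightarrow> 'k)"
    and actU :: "('u \<Rightarrow> 'k) \<Rightarrow> ('h \<Rightarrow> 'k) \<Rightarrow> ('u \<Rightarrow> 'k)"
    and rhoU :: "('u \<Rightarrow> 'k) \<Rightarrow> ('u \<times> 'h \<Rightarrow> 'k)"
    and \<alpha>V :: "('v::finite \<Rightarrow> 'k) \<Rightarrow> ('v \<Rightarrow> 'k)"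
    and actV :: "('v \<Rightarrow> 'k) \<Rightarrow> ('h \<Rightarrow> 'k) \<Rightarrow> ('v \<Rightarrow> 'k)"
    and rhoV :: "('v \<Rightarrow> 'k) \<Rightarrow> ('v \<times> 'h \<Rightarrow> 'k)"
    and \<alpha>W :: "('w::finite \<Rightarrow> 'k) \<Rightarrow> ('w \<Rightarrow> 'k)"
    and actW :: "('w \<Rightarrow> 'k) \<Rightarrow> ('h \<Rightarrow> 'k) \<Rightarrow> ('w \<Rightarrow> 'k)"
    and rhoW :: "('w \<Rightarrow> 'k) \<Rightarrow> ('w \<times> 'h \<Rightarrow> 'k)"
  assumes H: "hom_bialgebra mult one Delta eps \<alpha>H"
    and U: "hom_long_dimodule mult one Delta eps \<alpha>H \<alpha>U actU rhoU"
    and V: "hom_long_dimodule mult one Delta eps \<alpha>H \<alpha>V actV rhoV"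
    and W: "hom_long_dimodule mult one Delta eps \<alpha>H \<alpha>W actW rhoW"
  shows "tmap (xi \<alpha>H m \<alpha>U actU \<alpha>V rhoV) id
           \<circ> assocH_inv i j \<alpha>U \<alpha>W
           \<circ> tmap id (xi \<alpha>H m \<alpha>V actV \<alpha>W rhoW)
           \<circ> assocH i j \<alpha>U \<alpha>W
       = assocH_inv i j \<alpha>U \<alpha>W
           \<circ> tmap id (xi \<alpha>H m \<alpha>V actV \<alpha>W rhoW)
           \<circ> assocH i j \<alpha>U \<alpha>W
           \<circ> tmap (xi \<alpha>H m \<alpha>U actU \<alpha>V rhoV) id"
proof -
  from H have "lin \<alpha>H" "bij \<alpha>H"
    unfolding hom_bialgebra_def by blast+
  moreover from U have "lin \<alpha>U" "bij \<alpha>U" "bilin actU"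
    unfolding hom_long_dimodule_def by blast+
  moreover from W have "lin \<alpha>W" "bij \<alpha>W" "lin rhoW"
    unfolding hom_long_dimodule_def by blast+
  ultimately have pure_tensor:
    "tmap (xi \<alpha>H m \<alpha>U actU \<alpha>V rhoV) id
       (assocH_conj i j \<alpha>U \<alpha>W (xi \<alpha>H m \<alpha>V actV \<alpha>W rhoW) (tensor (tensor u v) w))
     = assocH_conj i j \<alpha>U \<alpha>W (xi \<alpha>H m \<alpha>V actV \<alpha>W rhoW)
       (tmap (xi \<alpha>H m \<alpha>U actU \<alpha>V rhoV) id (tensor (tensor u v) w))" for u v w
    by (rule xi_id_commutes_assocH_conj_tensor[OF V])
  have "tmap (xi \<alpha>H m \<alpha>U actU \<alpha>V rhoV) id \<circ> assocH_conj i j \<alpha>U \<alpha>W (xi \<alpha>H m \<alpha>V actV \<alpha>W rhoW)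
      = assocH_conj i j \<alpha>U \<alpha>W (xi \<alpha>H m \<alpha>V actV \<alpha>W rhoW) \<circ> tmap (xi \<alpha>H m \<alpha>U actU \<alpha>V rhoV) id"
    unfolding comp_def
    by (rule tensor3_ext[OF lin_comp[OF lin_tmap lin_assocH_conj] lin_comp[OF lin_assocH_conj lin_tmap]
        pure_tensor])
  then show ?thesis
    by (simp add: assocH_conj_def comp_assoc)
qed

end
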